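(* Let $(T_0,\widetilde T_0)$ be a joint pair of closed abstract Friedrichs operators on a complex Hilbert space $\mathcal{H}$, with $T_1:=\widetilde T_0^*$, $\widetilde T_1:=T_0^*$ and $\mathcal{W}_0:=\operatorname{dom}T_0=\operatorname{dom}\widetilde T_0$. Then the restrictions $T_1|_{\mathcal{W}_0+\operatorname{ker}\widetilde T_1}$ and $\widetilde T_1|_{\mathcal{W}_0+\operatorname{ker}T_1}$ are mutually adjoint, i.e. $(T_1|_{\mathcal{W}_0+\operatorname{ker}\widetilde T_1})^*=\widetilde T_1|_{\mathcal{W}_0+\operatorname{ker}T_1}$ and $(\widetilde T_1|_{\mathcal{W}_0+\operatorname{ker}T_1})^*=T_1|_{\mathcal{W}_0+\operatorname{ker}\widetilde T_1}$, and each of them is a bijection from its domain onto $\mathcal{H}$.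
   Context: $\mathcal{H}$ is a complex Hilbert space with inner product $\langle\cdot,\cdot\rangle$ and norm $\|\cdot\|$. A pair $(T,\widetilde T)$ of densely defined linear operators on $\mathcal{H}$ is a joint pair of abstract Friedrichs operators if: (T1) $T$ and $\widetilde T$ have a common dense domain $\mathcal{D}$ and $\langle T\varphi,\psi\rangle=\langle\varphi,\widetilde T\psi\rangle$ for all $\varphi,\psi\in\mathcal{D}$; (T2) there is $c>0$ with $\|(T+\widetilde T)\varphi\|\le c\|\varphi\|$ for all $\varphi\in\mathcal{D}$; (T3) there is $\mu_0>0$ with $\langle (T+\widetilde T)\varphi,\varphi\rangle\ge 2\mu_0\|\varphi\|^2$ for all $\varphi\in\mathcal{D}$. A joint pair of closed abstract Friedrichs operators is such a pair $(T_0,\widetilde T_0)$ in which both operators are closed. One has $T_0\subseteq T_1$, $\widetilde T_0\subseteq\widetilde T_1$ and $\operatorname{dom}T_1=\operatorname{dom}\widetilde T_1$. *)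

theory Defs
  imports "HOL-Analysis.Analysis" "HOL-Library.Complex_Order"
begin

text \<open>Complex inner product spaces (not in the distribution): a real vector space
  with a compatible complex scalar multiplication and a complex inner product
  (linear in the first argument) inducing the norm.  A complex Hilbert space
  is a type of class complex_inner that is also complete_space.\<close>

class complex_vector = real_vector +
  fixes scaleC :: "complex \<Rightarrow> 'a \<Rightarrow> 'a"
  assumes scaleC_scaleR: "scaleC (complex_of_real r) x = scaleR r x"
    and scaleC_add_right: "scaleC a (x + y) = scaleC a x + scaleC a y"
    and scaleC_add_left: "scaleC (a + b) x = scaleC a x + scaleC b x"
    and scaleC_scaleC: "scaleC a (scaleC b x) = scaleC (a * b) x"
    and scaleC_one: "scaleC 1 x = x"

class complex_inner = complex_vector + real_normed_vector +
  fixes cinner :: "'a \<Rightarrow> 'a \<Rightarrow> complex"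
  assumes cinner_commute: "cinner x y = cnj (cinner y x)"
    and cinner_add_left: "cinner (x + y) z = cinner x z + cinner y z"
    and cinner_scaleC_left: "cinner (scaleC r x) y = r * cinner x y"
    and cinner_ge_zero: "0 \<le> cinner x x"
    and cinner_eq_zero_iff: "cinner x x = 0 \<longleftrightarrow> x = 0"
    and norm_eq_sqrt_cinner: "norm x = sqrt (Re (cinner x x))"

text \<open>(Possibly unbounded) linear operators on H are represented by their graphs
  G :: ('a \<times> 'a) set: complex linear subspaces of H \<times> H that are functional.\<close>

definition is_linop :: "('a::complex_vector \<times> 'a) set \<Rightarrow> bool" where
  "is_linop G \<longleftrightarrow> (0, 0) \<in> G
     \<and> (\<forall>x y u v. (x, y) \<in> G \<longrightarrow> (u, v) \<in> G \<longrightarrow> (x + u, y + v) \<in> G)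
     \<and> (\<forall>c x y. (x, y) \<in> G \<longrightarrow> (scaleC c x, scaleC c y) \<in> G)
     \<and> (\<forall>x y z. (x, y) \<in> G \<longrightarrow> (x, z) \<in> G \<longrightarrow> y = z)"

definition op_dom :: "('a \<times> 'a) set \<Rightarrow> 'a set" where
  "op_dom G = Domain G"

definition op_apply :: "('a \<times> 'a) set \<Rightarrow> 'a \<Rightarrow> 'a" where
  "op_apply G x = (THE y. (x, y) \<in> G)"

definition op_ker :: "('a::zero \<times> 'a) set \<Rightarrow> 'a set" where
  "op_ker G = {x. (x, 0) \<in> G}"

definition densely_defined :: "('a::topological_space \<times> 'a) set \<Rightarrow> bool" where
  "densely_defined G \<longleftrightarrow> closure (op_dom G) = UNIV"

definition closed_op :: "('a::topological_space \<times> 'a) set \<Rightarrow> bool" where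
  "closed_op G \<longleftrightarrow> closed G"

definition op_adjoint :: "('a::complex_inner \<times> 'a) set \<Rightarrow> ('a \<times> 'a) set" where
  "op_adjoint G = {(y, z). \<forall>(x, w) \<in> G. cinner w y = cinner x z}"

definition op_restrict :: "('a \<times> 'a) set \<Rightarrow> 'a set \<Rightarrow> ('a \<times> 'a) set" where
  "op_restrict G S = {(x, y) \<in> G. x \<in> S}"

definition set_plus_vec :: "'a::plus set \<Rightarrow> 'a set \<Rightarrow> 'a set" where
  "set_plus_vec A B = {u + v | u v. u \<in> A \<and> v \<in> B}"

definition friedrichs_pair :: "('a::complex_inner \<times> 'a) set \<Rightarrow> ('a \<times> 'a) set \<Rightarrow> bool" where
  "friedrichs_pair T Tt \<longleftrightarrow>
     is_linop T \<and> is_linop Tt \<and> densely_defined T \<and> densely_defined Tt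
     \<and> op_dom T = op_dom Tt
     \<and> (\<forall>\<phi> \<in> op_dom T. \<forall>\<psi> \<in> op_dom T.
          cinner (op_apply T \<phi>) \<psi> = cinner \<phi> (op_apply Tt \<psi>))
     \<and> (\<exists>c > 0. \<forall>\<phi> \<in> op_dom T. norm (op_apply T \<phi> + op_apply Tt \<phi>) \<le> c * norm \<phi>)
     \<and> (\<exists>\<mu>0 > 0. \<forall>\<phi> \<in> op_dom T.
          cinner (op_apply T \<phi> + op_apply Tt \<phi>) \<phi> \<ge> complex_of_real (2 * \<mu>0 * (norm \<phi>)\<^sup>2))"

definition closed_friedrichs_pair :: "('a::complex_inner \<times> 'a) set \<Rightarrow> ('a \<times> 'a) set \<Rightarrow> bool" where
  "closed_friedrichs_pair T Tt \<longleftrightarrow> friedrichs_pair T Tt \<and> closed_op T \<and> closed_op Tt"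

end

theory Submission
  imports Defs
begin

(* The sum T0 + Tt0 is bounded, symmetric and coercive on the dense domain W0, so it extends
   to a bounded self-adjoint coercive operator C on H.  The restriction A of T1 to
   W0 + ker Tt1 acts by A (w + k) = T0 w + C k, and the identity
     2 Re <A (w + k), w + k> = Re <C (w + k), w + k> + Re <C k, k>
   makes A bounded below; A is moreover closed, so its range is closed.  A vector g orthogonal
   to the range lies in ker Tt1 and then also satisfies <C g, g> = 0, so g = 0: A is bijective.
   Expanding the inner products shows that A is contained in B*, where B is the corresponding
   restriction of Tt1; since A is onto and B* is injective, B* = A.  Everything is symmetric
   in T0 and Tt0. *)

section \<open>Complex inner product spaces\<close>

lemma scaleC_zero_right [simp]: "scaleC c 0 = 0"
  using scaleC_add_right[of c 0 0] by simp

lemma scaleC_minus_one [simp]: "scaleC (- 1) x = - x"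
  using scaleC_scaleR[of "- 1" x] by simp

lemma cinner_zero_left [simp]: "cinner 0 y = 0"
  using cinner_add_left[of 0 0 y] by simp

lemma cinner_zero_right [simp]: "cinner x 0 = 0"
  using cinner_commute[of x 0] by simp

lemma cinner_add_right: "cinner x (y + z) = cinner x y + cinner x z"
  using cinner_commute[of x "y + z"] cinner_add_left[of y z x]
    cinner_commute[of y x] cinner_commute[of z x]
  by simp

lemma cinner_minus_left: "cinner (- x) y = - cinner x y"
  using cinner_add_left[of "- x" x y] by (simp add: eq_neg_iff_add_eq_0)

lemma cinner_minus_right: "cinner x (- y) = - cinner x y"
  using cinner_commute[of x "- y"] cinner_minus_left[of y x] cinner_commute[of y x] by simp

lemma cinner_diff_left: "cinner (x - y) z = cinner x z - cinner y z"
  using cinner_add_left[of x "- y" z] by (simp add: cinner_minus_left)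

lemma cinner_diff_right: "cinner x (y - z) = cinner x y - cinner x z"
  using cinner_add_right[of x y "- z"] by (simp add: cinner_minus_right)

lemma cinner_scaleC_right: "cinner x (scaleC r y) = cnj r * cinner x y"
  using cinner_commute[of x "scaleC r y"] cinner_scaleC_left[of r y x] cinner_commute[of y x]
  by simp

lemma cinner_scaleR_left: "cinner (scaleR r x) y = complex_of_real r * cinner x y"
  using cinner_scaleC_left[of "complex_of_real r" x y] by (simp add: scaleC_scaleR)

lemma cinner_scaleR_right: "cinner x (scaleR r y) = complex_of_real r * cinner x y"
  using cinner_scaleC_right[of x "complex_of_real r" y] by (simp add: scaleC_scaleR)

lemma Re_cinner_commute: "Re (cinner y x) = Re (cinner x y)"
  by (subst cinner_commute) simp

lemma cinner_self_eq_norm: "cinner x x = complex_of_real ((norm x)\<^sup>2)"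
proof -
  have "Im (cinner x x) = 0" "Re (cinner x x) \<ge> 0"
    using cinner_ge_zero[of x] by (auto simp: less_eq_complex_def)
  then show ?thesis by (simp add: norm_eq_sqrt_cinner complex_eq_iff)
qed

lemma norm_cinner_le: "cmod (cinner x y) \<le> norm x * norm y"
proof (cases "y = 0")
  case False
  define a where "a = cinner x y"
  define n where "n = (norm y)\<^sup>2"
  define t where "t = a / complex_of_real n"
  have n: "n > 0"
    using False by (simp add: n_def)
  have "0 \<le> Re (cinner (x - scaleC t y) (x - scaleC t y))"
    by (simp add: cinner_self_eq_norm)
  also have "cinner (x - scaleC t y) (x - scaleC t y)
      = cinner x x - cnj t * a - t * cnj a + t * cnj t * complex_of_real n"
    by (simp add: cinner_diff_left cinner_diff_right cinner_scaleC_left cinner_scaleC_right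
        algebra_simps a_def n_def cinner_self_eq_norm[of y] cinner_commute[of y x])
  also have "\<dots> = cinner x x - a * cnj a / complex_of_real n"
    using n by (simp add: t_def field_simps)
  also have "a * cnj a = complex_of_real ((cmod a)\<^sup>2)"
    by (rule complex_norm_square[symmetric])
  finally have "(cmod a)\<^sup>2 \<le> (norm x)\<^sup>2 * n"
    using n by (simp add: cinner_self_eq_norm field_simps)
  then have "(cmod a)\<^sup>2 \<le> (norm x * norm y)\<^sup>2"
    by (simp add: n_def power_mult_distrib)
  then show ?thesis
    unfolding a_def by (meson mult_nonneg_nonneg norm_ge_zero power2_le_imp_le)
qed simp

lemma bounded_bilinear_cinner: "bounded_bilinear cinner"
proof
  fix a a' b b' :: 'a and r :: real
  show "cinner (a + a') b = cinner a b + cinner a' b"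
    by (rule cinner_add_left)
  show "cinner a (b + b') = cinner a b + cinner a b'"
    by (rule cinner_add_right)
  show "cinner (r *\<^sub>R a) b = r *\<^sub>R cinner a b"
    by (simp add: cinner_scaleR_left scaleR_conv_of_real)
  show "cinner a (r *\<^sub>R b) = r *\<^sub>R cinner a b"
    by (simp add: cinner_scaleR_right scaleR_conv_of_real)
  show "\<exists>K. \<forall>a b::'a. norm (cinner a b) \<le> norm a * norm b * K"
    by (rule exI[of _ 1]) (simp add: norm_cinner_le)
qed

lemmas tendsto_cinner = bounded_bilinear.tendsto[OF bounded_bilinear_cinner]
lemmas continuous_on_cinner = bounded_bilinear.continuous_on[OF bounded_bilinear_cinner]

lemma Re_cinner_le_norm: "Re (cinner x y) \<le> norm x * norm y"
  using complex_Re_le_cmod norm_cinner_le order_trans by blast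

lemma norm_add_square:
  "(norm (x + y))\<^sup>2 = (norm x)\<^sup>2 + 2 * Re (cinner x y) + (norm y)\<^sup>2"
proof -
  have "(norm (x + y))\<^sup>2 = Re (cinner (x + y) (x + y))"
    by (simp add: cinner_self_eq_norm)
  also have "\<dots> = Re (cinner x x) + Re (cinner x y) + Re (cinner y x) + Re (cinner y y)"
    by (simp add: cinner_add_left cinner_add_right)
  finally show ?thesis
    by (simp add: Re_cinner_commute[of y x] cinner_self_eq_norm)
qed

lemma norm_diff_square:
  "(norm (x - y))\<^sup>2 = (norm x)\<^sup>2 - 2 * Re (cinner x y) + (norm y)\<^sup>2"
  using norm_add_square[of x "- y"] by (simp add: cinner_minus_right)

lemma parallelogram_law:
  "(norm (x + y :: 'a::complex_inner))\<^sup>2 + (norm (x - y))\<^sup>2 = 2 * (norm x)\<^sup>2 + 2 * (norm y)\<^sup>2"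
  using norm_add_square[of x y] norm_diff_square[of x y] by simp

section \<open>Closed subspaces of a Hilbert space\<close>

definition csubspace :: "'a::complex_vector set \<Rightarrow> bool" where
  "csubspace M \<longleftrightarrow> 0 \<in> M \<and> (\<forall>x\<in>M. \<forall>y\<in>M. x + y \<in> M) \<and> (\<forall>c. \<forall>x\<in>M. scaleC c x \<in> M)"

lemma csubspace_0: "csubspace M \<Longrightarrow> 0 \<in> M"
  and csubspace_add: "csubspace M \<Longrightarrow> x \<in> M \<Longrightarrow> y \<in> M \<Longrightarrow> x + y \<in> M"
  and csubspace_scaleC: "csubspace M \<Longrightarrow> x \<in> M \<Longrightarrow> scaleC c x \<in> M"
  unfolding csubspace_def by blast+

lemma csubspace_scaleR: "csubspace M \<Longrightarrow> x \<in> M \<Longrightarrow> scaleR r x \<in> M"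
  using csubspace_scaleC[of M x "complex_of_real r"] by (simp add: scaleC_scaleR)

lemma Cauchy_if_dist_le:
  assumes "Cauchy s" and "\<And>m n. dist (g m) (g n) \<le> K * dist (s m) (s n)"
  shows "Cauchy g"
proof (rule metric_CauchyI)
  fix e :: real
  assume "e > 0"
  then have e': "e / (\<bar>K\<bar> + 1) > 0"
    by simp
  obtain N where N: "\<forall>m\<ge>N. \<forall>n\<ge>N. dist (s m) (s n) < e / (\<bar>K\<bar> + 1)"
    using metric_CauchyD[OF assms(1) e'] by blast
  have "dist (g m) (g n) < e" if "m \<ge> N" "n \<ge> N" for m n
  proof -
    have "dist (g m) (g n) \<le> (\<bar>K\<bar> + 1) * dist (s m) (s n)"
      using assms(2)[of m n] by (smt (verit) mult_right_mono zero_le_dist)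
    also have "\<dots> < (\<bar>K\<bar> + 1) * (e / (\<bar>K\<bar> + 1))"
      using N that by (intro mult_strict_left_mono) auto
    finally show ?thesis
      by simp
  qed
  then show "\<exists>N. \<forall>m\<ge>N. \<forall>n\<ge>N. dist (g m) (g n) < e"
    by blast
qed

lemma dist_le_minimal_distance:
  fixes M :: "'a::complex_inner set"
  assumes M: "csubspace M" and d: "\<And>v. v \<in> M \<Longrightarrow> d \<le> (norm (f - v))\<^sup>2"
    and "m \<in> M" "m' \<in> M"
  shows "(norm (m - m'))\<^sup>2 \<le> 2 * ((norm (f - m))\<^sup>2 - d) + 2 * ((norm (f - m'))\<^sup>2 - d)"
proof -
  have "scaleR (1/2) (m + m') \<in> M"
    using assms(3,4) M by (intro csubspace_scaleR csubspace_add)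
  then have "4 * d \<le> 4 * (norm (f - scaleR (1/2) (m + m')))\<^sup>2"
    using d by simp
  also have "\<dots> = (norm ((f - m) + (f - m')))\<^sup>2"
  proof -
    have "(f - m) + (f - m') = scaleR 2 (f - scaleR (1/2) (m + m'))"
      by (simp add: algebra_simps scaleR_2)
    then show ?thesis
      by (simp add: power_mult_distrib)
  qed
  finally show ?thesis
    using parallelogram_law[of "f - m" "f - m'"] by (simp add: norm_minus_commute)
qed

lemma Cauchy_minimizing_sequence:
  fixes M :: "'a::complex_inner set"
  assumes M: "csubspace M" and d: "\<And>v. v \<in> M \<Longrightarrow> d \<le> (norm (f - v))\<^sup>2"
    and sM: "\<And>n. s n \<in> M" and s: "\<And>n. (norm (f - s n))\<^sup>2 < d + 1 / Suc n"
  shows "Cauchy s"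
proof (rule metric_CauchyI)
  fix e :: real
  assume "e > 0"
  obtain N :: nat where N: "4 / e\<^sup>2 < N"
    using reals_Archimedean2 by blast
  have "dist (s m) (s n) < e" if "m \<ge> N" "n \<ge> N" for m n
  proof -
    have "(norm (s m - s n))\<^sup>2 \<le> 2 / Suc m + 2 / Suc n"
      using dist_le_minimal_distance[OF M d sM sM, of m n] s[of m] s[of n] by simp
    also have "\<dots> \<le> 4 / Suc N"
    proof -
      have "2 / Suc m \<le> 2 / Suc N" "2 / Suc n \<le> 2 / Suc N"
        using that by (auto intro!: frac_le)
      then show ?thesis
        by simp
    qed
    also have "\<dots> < e\<^sup>2"
    proof -
      have "4 < N * e\<^sup>2"
        using N \<open>e > 0\<close> by (simp add: field_simps)
      also have "\<dots> \<le> Suc N * e\<^sup>2"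
        by (simp add: mult_right_mono)
      finally show ?thesis
        by (simp add: pos_divide_less_eq mult.commute)
    qed
    finally show ?thesis
      using \<open>e > 0\<close> by (simp add: dist_norm power_less_imp_less_base)
  qed
  then show "\<exists>N. \<forall>m\<ge>N. \<forall>n\<ge>N. dist (s m) (s n) < e"
    by blast
qed

lemma closest_point_exists:
  fixes M :: "'a::{complex_inner,complete_space} set"
  assumes "closed M" and M: "csubspace M"
  shows "\<exists>m\<in>M. \<forall>v\<in>M. norm (f - m) \<le> norm (f - v)"
proof -
  define d where "d = (INF v\<in>M. (norm (f - v))\<^sup>2)"
  have bdd: "bdd_below ((\<lambda>v. (norm (f - v))\<^sup>2) ` M)"
    by (rule bdd_belowI[of _ 0]) auto
  have d_le: "d \<le> (norm (f - v))\<^sup>2" if "v \<in> M" for v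
    unfolding d_def by (rule cINF_lower[OF bdd that])
  have "\<exists>m\<in>M. (norm (f - m))\<^sup>2 < d + 1 / Suc n" for n
    using cINF_less_iff[OF _ bdd, of "d + 1 / Suc n"] csubspace_0[OF M] unfolding d_def by auto
  then obtain s where sM: "\<And>n. s n \<in> M" and s: "\<And>n. (norm (f - s n))\<^sup>2 < d + 1 / Suc n"
    by metis
  then obtain m where lim: "s \<longlonglongrightarrow> m"
    using Cauchy_minimizing_sequence[OF M d_le] Cauchy_convergent_iff convergent_def by blast
  have "m \<in> M"
    using \<open>closed M\<close> lim sM closed_sequential_limits by blast
  have "(\<lambda>n. (norm (f - s n))\<^sup>2) \<longlonglongrightarrow> (norm (f - m))\<^sup>2"
    by (intro tendsto_intros lim)
  moreover have "(\<lambda>n. d + 1 / Suc n) \<longlonglongrightarrow> d + 0"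
    by (intro tendsto_intros LIMSEQ_Suc[OF lim_inverse_n'])
  ultimately have "(norm (f - m))\<^sup>2 \<le> d"
    using s by (intro LIMSEQ_le) (auto intro: less_imp_le)
  then show ?thesis
    using \<open>m \<in> M\<close> d_le by (metis norm_ge_zero order_trans power2_le_imp_le)
qed

lemma Re_cinner_eq_0_if_minimal:
  assumes "\<And>t::real. norm g \<le> norm (g - scaleR t v)"
  shows "Re (cinner g v) = 0"
proof (cases "v = 0")
  case False
  define p where "p = Re (cinner g v)"
  define t where "t = p / (norm v)\<^sup>2"
  have "(norm g)\<^sup>2 \<le> (norm (g - scaleR t v))\<^sup>2"
    using assms[of t] by simp
  also have "\<dots> = (norm g)\<^sup>2 - 2 * t * p + t\<^sup>2 * (norm v)\<^sup>2"
    by (simp add: norm_diff_square p_def cinner_scaleR_right power_mult_distrib)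
  finally have "p\<^sup>2 / (norm v)\<^sup>2 \<le> 0"
    using False by (simp add: t_def power2_eq_square field_simps)
  then show ?thesis
    using False by (simp add: p_def divide_le_0_iff)
qed simp

lemma cinner_eq_0_if_closest_point:
  fixes M :: "'a::complex_inner set"
  assumes M: "csubspace M" and "m \<in> M" and closest: "\<And>v. v \<in> M \<Longrightarrow> norm (f - m) \<le> norm (f - v)"
    and "v \<in> M"
  shows "cinner (f - m) v = 0"
proof -
  have "Re (cinner (f - m) w) = 0" if "w \<in> M" for w
  proof (rule Re_cinner_eq_0_if_minimal)
    fix t :: real
    have "m + scaleR t w \<in> M"
      using M \<open>m \<in> M\<close> that by (intro csubspace_add csubspace_scaleR)
    then show "norm (f - m) \<le> norm (f - m - scaleR t w)"
      using closest by (simp add: algebra_simps)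
  qed
  from this[of v] this[of "scaleC \<i> v"] show ?thesis
    using M \<open>v \<in> M\<close> by (simp add: csubspace_scaleC cinner_scaleC_right complex_eq_iff)
qed

lemma closed_csubspace_eq_UNIV:
  fixes M :: "'a::{complex_inner,complete_space} set"
  assumes "closed M" "csubspace M" and orth: "\<And>g. (\<And>v. v \<in> M \<Longrightarrow> cinner v g = 0) \<Longrightarrow> g = 0"
  shows "M = UNIV"
proof -
  have "f \<in> M" for f
  proof -
    obtain m where "m \<in> M" and closest: "\<forall>v\<in>M. norm (f - m) \<le> norm (f - v)"
      using closest_point_exists[OF assms(1,2)] by blast
    have "f - m = 0"
    proof (rule orth)
      fix v
      assume "v \<in> M"
      then show "cinner v (f - m) = 0"
        using cinner_eq_0_if_closest_point[OF assms(2) \<open>m \<in> M\<close>] closest cinner_commute[of v]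
        by fastforce
    qed
    then show ?thesis
      using \<open>m \<in> M\<close> by simp
  qed
  then show ?thesis
    by blast
qed

section \<open>Operators given by their graphs\<close>

lemma is_linop_zero: "is_linop G \<Longrightarrow> (0, 0) \<in> G"
  and is_linop_add: "is_linop G \<Longrightarrow> (x, a) \<in> G \<Longrightarrow> (y, b) \<in> G \<Longrightarrow> (x + y, a + b) \<in> G"
  and is_linop_scaleC: "is_linop G \<Longrightarrow> (x, a) \<in> G \<Longrightarrow> (scaleC c x, scaleC c a) \<in> G"
  and is_linop_single_valued: "is_linop G \<Longrightarrow> (x, a) \<in> G \<Longrightarrow> (x, b) \<in> G \<Longrightarrow> a = b"
  unfolding is_linop_def by blast+

lemma is_linop_diff:
  assumes "is_linop G" "(x, a) \<in> G" "(y, b) \<in> G"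
  shows "(x - y, a - b) \<in> G"
proof -
  have "(scaleC (-1) y, scaleC (-1) b) \<in> G"
    using assms by (intro is_linop_scaleC)
  then have "(- y, - b) \<in> G"
    by simp
  from is_linop_add[OF assms(1,2) this] show ?thesis
    by simp
qed

lemma op_apply_eq: "is_linop G \<Longrightarrow> (x, a) \<in> G \<Longrightarrow> op_apply G x = a"
  unfolding op_apply_def by (rule the_equality) (auto dest: is_linop_single_valued)

lemma op_apply_mem: "is_linop G \<Longrightarrow> x \<in> Domain G \<Longrightarrow> (x, op_apply G x) \<in> G"
  using op_apply_eq by fastforce

lemma csubspace_Domain: "is_linop G \<Longrightarrow> csubspace (Domain G)"
  unfolding csubspace_def by (blast intro: is_linop_zero is_linop_add is_linop_scaleC)

lemma csubspace_Range: "is_linop G \<Longrightarrow> csubspace (Range G)"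
  unfolding csubspace_def by (blast intro: is_linop_zero is_linop_add is_linop_scaleC)

lemma csubspace_op_ker: "is_linop G \<Longrightarrow> csubspace (op_ker G)"
  unfolding csubspace_def op_ker_def
  using is_linop_add[of G _ 0 _ 0] is_linop_scaleC[of G _ 0] is_linop_zero[of G] by fastforce

lemma csubspace_set_plus_vec:
  assumes "csubspace A" "csubspace B"
  shows "csubspace (set_plus_vec A B)"
  unfolding csubspace_def set_plus_vec_def
proof (intro conjI ballI allI)
  show "0 \<in> {u + v |u v. u \<in> A \<and> v \<in> B}"
    using assms by (auto intro!: exI[of _ 0] csubspace_0)
next
  fix x y
  assume "x \<in> {u + v |u v. u \<in> A \<and> v \<in> B}" "y \<in> {u + v |u v. u \<in> A \<and> v \<in> B}"
  then obtain u v u' v' where "x = u + v" "y = u' + v'" "u \<in> A" "v \<in> B" "u' \<in> A" "v' \<in> B"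
    by blast
  then show "x + y \<in> {u + v |u v. u \<in> A \<and> v \<in> B}"
    using assms
    by (intro CollectI exI[of _ "u + u'"] exI[of _ "v + v'"]) (auto intro: csubspace_add)
next
  fix c x
  assume "x \<in> {u + v |u v. u \<in> A \<and> v \<in> B}"
  then obtain u v where "x = u + v" "u \<in> A" "v \<in> B"
    by blast
  then show "scaleC c x \<in> {u + v |u v. u \<in> A \<and> v \<in> B}"
    using assms by (auto simp: scaleC_add_right intro!: csubspace_scaleC)
qed

lemma is_linop_op_restrict:
  assumes "is_linop G" "csubspace M"
  shows "is_linop (op_restrict G M)"
  using assms unfolding is_linop_def op_restrict_def csubspace_def by auto

lemma mem_op_adjoint_iff: "(y, z) \<in> op_adjoint G \<longleftrightarrow> (\<forall>x w. (x, w) \<in> G \<longrightarrow> cinner w y = cinner x z)"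
  unfolding op_adjoint_def by auto

lemma op_adjoint_zero: "(0, 0) \<in> op_adjoint G"
  and op_adjoint_add: "(y, z) \<in> op_adjoint G \<Longrightarrow> (y', z') \<in> op_adjoint G \<Longrightarrow>
    (y + y', z + z') \<in> op_adjoint G"
  and op_adjoint_diff: "(y, z) \<in> op_adjoint G \<Longrightarrow> (y', z') \<in> op_adjoint G \<Longrightarrow>
    (y - y', z - z') \<in> op_adjoint G"
  and op_adjoint_scaleC: "(y, z) \<in> op_adjoint G \<Longrightarrow> (scaleC c y, scaleC c z) \<in> op_adjoint G"
  unfolding mem_op_adjoint_iff
  by (simp_all add: cinner_add_right cinner_diff_right cinner_scaleC_right)

lemma closed_op_adjoint: "closed (op_adjoint G)"
proof -
  have "op_adjoint G = (\<Inter>p\<in>G. {q. cinner (snd p) (fst q) = cinner (fst p) (snd q)})"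
    unfolding op_adjoint_def by (auto; drule (1) bspec; simp)
  then show ?thesis
    by (simp only:)
      (intro closed_INT ballI closed_Collect_eq continuous_on_cinner continuous_intros)
qed

lemma eq_0_if_orthogonal_dense:
  assumes "closure D = UNIV" and "\<And>w. w \<in> D \<Longrightarrow> cinner w a = 0"
  shows "a = 0"
proof -
  have "closed {w. cinner w a = 0}"
    by (intro closed_Collect_eq continuous_on_cinner continuous_intros)
  then have "closure D \<subseteq> {w. cinner w a = 0}"
    using assms(2) by (intro closure_minimal) auto
  then show ?thesis
    using assms(1) cinner_eq_zero_iff by auto
qed

lemma is_linop_op_adjoint:
  assumes "closure (Domain G) = UNIV"
  shows "is_linop (op_adjoint G)"
proof -
  have "z = z'" if "(y, z) \<in> op_adjoint G" "(y, z') \<in> op_adjoint G" for y z z'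
  proof -
    have "(0, z - z') \<in> op_adjoint G"
      using op_adjoint_diff[OF that] by simp
    then have "z - z' = 0"
      by (intro eq_0_if_orthogonal_dense[OF assms]) (auto simp: mem_op_adjoint_iff)
    then show ?thesis
      by simp
  qed
  then show ?thesis
    unfolding is_linop_def using op_adjoint_zero op_adjoint_add op_adjoint_scaleC by blast
qed

lemma op_adjoint_eqI:
  assumes "A \<subseteq> op_adjoint B" and "Range A = UNIV"
    and "\<And>y. (y, 0) \<in> op_adjoint B \<Longrightarrow> y = 0"
  shows "op_adjoint B = A"
proof
  show "op_adjoint B \<subseteq> A"
  proof
    fix p
    assume p: "p \<in> op_adjoint B"
    obtain y z where yz: "p = (y, z)"
      by (cases p)
    obtain u where u: "(u, z) \<in> A"
      using assms(2) by blast
    then have "(y - u, 0) \<in> op_adjoint B"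
      using op_adjoint_diff[OF p[unfolded yz]] assms(1) by fastforce
    then show "p \<in> A"
      using assms(3) u yz by fastforce
  qed
qed (rule assms(1))

lemma closed_Range_if_bounded_below:
  fixes G :: "('a::{complex_inner,complete_space} \<times> 'a) set"
  assumes G: "is_linop G" "closed G" and "mu > 0"
    and below: "\<And>x a. (x, a) \<in> G \<Longrightarrow> mu * norm x \<le> norm a"
  shows "closed (Range G)"
  unfolding closed_sequential_limits
proof (intro allI impI, elim conjE)
  fix a l
  assume "\<forall>n. a n \<in> Range G" and lim: "a \<longlonglongrightarrow> l"
  then have "\<forall>n. \<exists>x. (x, a n) \<in> G"
    by blast
  then obtain x where x: "\<And>n. (x n, a n) \<in> G"
    by metis
  have "Cauchy x"
  proof (rule Cauchy_if_dist_le[OF LIMSEQ_imp_Cauchy[OF lim], where K = "1 / mu"])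
    fix m n
    show "dist (x m) (x n) \<le> 1 / mu * dist (a m) (a n)"
      using below[OF is_linop_diff[OF G(1) x x, of m n]] \<open>mu > 0\<close>
      by (simp add: dist_norm field_simps)
  qed
  then obtain y where "x \<longlonglongrightarrow> y"
    using Cauchy_convergent_iff convergent_def by blast
  then have "(y, l) \<in> G"
    using closed_sequentially[OF G(2), of "\<lambda>n. (x n, a n)"] x tendsto_Pair[OF _ lim] by blast
  then show "l \<in> Range G"
    by blast
qed

lemma bij_betw_op_apply_if_bounded_below:
  assumes G: "is_linop G" and "mu > 0" and below: "\<And>x a. (x, a) \<in> G \<Longrightarrow> mu * norm x \<le> norm a"
    and "Range G = UNIV"
  shows "bij_betw (op_apply G) (op_dom G) UNIV"
  unfolding bij_betw_def
proof
  show "inj_on (op_apply G) (op_dom G)"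
  proof (rule inj_onI)
    fix x y
    assume "x \<in> op_dom G" "y \<in> op_dom G" "op_apply G x = op_apply G y"
    then have "(x - y, 0) \<in> G"
      using is_linop_diff[OF G op_apply_mem op_apply_mem, of x y] by (simp add: op_dom_def G)
    then have "mu * norm (x - y) \<le> 0"
      using below by fastforce
    then show "x = y"
      using \<open>mu > 0\<close> by (simp add: mult_le_0_iff)
  qed
  have "f \<in> op_apply G ` op_dom G" for f
  proof -
    obtain x where "(x, f) \<in> G"
      using \<open>Range G = UNIV\<close> by blast
    then show ?thesis
      using op_apply_eq[OF G] unfolding op_dom_def by force
  qed
  then show "op_apply G ` op_dom G = UNIV"
    by blast
qed

section \<open>Bounded symmetric operators\<close>

locale bounded_symmetric =
  fixes S :: "('a::{complex_inner,complete_space} \<times> 'a) set" and c :: real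
  assumes linop: "is_linop S"
    and dense: "closure (Domain S) = UNIV"
    and bounded: "(x, a) \<in> S \<Longrightarrow> norm a \<le> c * norm x"
    and symmetric: "(x, a) \<in> S \<Longrightarrow> (y, b) \<in> S \<Longrightarrow> cinner a y = cinner x b"
begin

(* The continuous extension of S is realised as the adjoint of S, which is everywhere defined
   since S is bounded and symmetric. *)
definition bounded_ext :: "'a \<Rightarrow> 'a" where
  "bounded_ext = op_apply (op_adjoint S)"

lemma tendsto_op_adjoint:
  assumes sa: "\<And>n. (s n, a n) \<in> S" and lim: "s \<longlonglongrightarrow> y"
  shows "\<exists>z. a \<longlonglongrightarrow> z \<and> (y, z) \<in> op_adjoint S"
proof -
  have "Cauchy a"
  proof (rule Cauchy_if_dist_le[OF LIMSEQ_imp_Cauchy[OF lim], where K = c])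
    fix m n
    show "dist (a m) (a n) \<le> c * dist (s m) (s n)"
      using bounded[OF is_linop_diff[OF linop sa sa, of m n]] by (simp add: dist_norm)
  qed
  then obtain z where z: "a \<longlonglongrightarrow> z"
    using Cauchy_convergent_iff convergent_def by blast
  have "cinner b y = cinner x z" if "(x, b) \<in> S" for x b
  proof -
    have "(\<lambda>n. cinner b (s n)) \<longlonglongrightarrow> cinner b y"
      by (intro tendsto_cinner tendsto_const lim)
    then have "(\<lambda>n. cinner x (a n)) \<longlonglongrightarrow> cinner b y"
      using symmetric[OF that sa] by simp
    moreover have "(\<lambda>n. cinner x (a n)) \<longlonglongrightarrow> cinner x z"
      by (intro tendsto_cinner tendsto_const z)
    ultimately show ?thesis
      by (rule LIMSEQ_unique)
  qed
  then show ?thesis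
    using z by (auto simp: mem_op_adjoint_iff)
qed

lemma approximating_sequence: "\<exists>s a. (\<forall>n. (s n, a n) \<in> S) \<and> s \<longlonglongrightarrow> y"
proof -
  obtain s where "\<forall>n. s n \<in> Domain S" "s \<longlonglongrightarrow> y"
    using dense closure_sequential[of y "Domain S"] by auto
  then show ?thesis
    by (intro exI[of _ s] exI[of _ "\<lambda>n. op_apply S (s n)"]) (simp add: op_apply_mem[OF linop])
qed

lemma is_linop_adjoint: "is_linop (op_adjoint S)"
  using is_linop_op_adjoint[OF dense] .

lemma bounded_ext_mem: "(y, bounded_ext y) \<in> op_adjoint S"
proof -
  obtain s a where "\<And>n. (s n, a n) \<in> S" "s \<longlonglongrightarrow> y"
    using approximating_sequence[of y] by blast
  then have "y \<in> Domain (op_adjoint S)"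
    using tendsto_op_adjoint by blast
  then show ?thesis
    unfolding bounded_ext_def by (rule op_apply_mem[OF is_linop_adjoint])
qed

lemma bounded_ext_eq: "(y, z) \<in> op_adjoint S \<Longrightarrow> bounded_ext y = z"
  unfolding bounded_ext_def by (rule op_apply_eq[OF is_linop_adjoint])

lemma bounded_ext_extends: "(x, a) \<in> S \<Longrightarrow> bounded_ext x = a"
  by (rule bounded_ext_eq) (use symmetric in \<open>auto simp only: mem_op_adjoint_iff\<close>)

lemma tendsto_bounded_ext:
  assumes "\<And>n. (s n, a n) \<in> S" and "s \<longlonglongrightarrow> y"
  shows "a \<longlonglongrightarrow> bounded_ext y"
proof -
  obtain z where "a \<longlonglongrightarrow> z" "(y, z) \<in> op_adjoint S"
    using tendsto_op_adjoint[OF assms] by blast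
  then show ?thesis
    using bounded_ext_eq by simp
qed

lemma bounded_ext_symmetric: "cinner (bounded_ext x) y = cinner x (bounded_ext y)"
proof -
  obtain s a where sa: "\<And>n. (s n, a n) \<in> S" and lim: "s \<longlonglongrightarrow> x"
    using approximating_sequence[of x] by blast
  have "(\<lambda>n. cinner (a n) y) \<longlonglongrightarrow> cinner (bounded_ext x) y"
    by (intro tendsto_cinner tendsto_const tendsto_bounded_ext[OF sa lim])
  moreover have "cinner (a n) y = cinner (s n) (bounded_ext y)" for n
    using bounded_ext_mem[of y] sa unfolding mem_op_adjoint_iff by blast
  ultimately have "(\<lambda>n. cinner (s n) (bounded_ext y)) \<longlonglongrightarrow> cinner (bounded_ext x) y"
    by simp
  moreover have "(\<lambda>n. cinner (s n) (bounded_ext y)) \<longlonglongrightarrow> cinner x (bounded_ext y)"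
    by (intro tendsto_cinner tendsto_const lim)
  ultimately show ?thesis
    by (rule LIMSEQ_unique)
qed

lemma bounded_linear_bounded_ext: "bounded_linear bounded_ext"
proof (rule bounded_linear_intro[where K = c])
  fix x y :: 'a and r :: real
  show "bounded_ext (x + y) = bounded_ext x + bounded_ext y"
    by (intro bounded_ext_eq op_adjoint_add bounded_ext_mem)
  show "bounded_ext (scaleR r x) = scaleR r (bounded_ext x)"
    using op_adjoint_scaleC[OF bounded_ext_mem[of x], where c = "complex_of_real r"]
    by (intro bounded_ext_eq) (simp add: scaleC_scaleR)
  obtain s a where sa: "\<And>n. (s n, a n) \<in> S" and lim: "s \<longlonglongrightarrow> x"
    using approximating_sequence[of x] by blast
  have "(\<lambda>n. norm (a n)) \<longlonglongrightarrow> norm (bounded_ext x)"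
    by (intro tendsto_norm tendsto_bounded_ext[OF sa lim])
  moreover have "(\<lambda>n. c * norm (s n)) \<longlonglongrightarrow> c * norm x"
    by (intro tendsto_intros lim)
  ultimately have "norm (bounded_ext x) \<le> c * norm x"
    using bounded[OF sa] by (intro LIMSEQ_le) auto
  then show "norm (bounded_ext x) \<le> norm x * c"
    by (simp add: mult.commute)
qed

sublocale bounded_ext: bounded_linear bounded_ext
  by (rule bounded_linear_bounded_ext)

lemma bounded_ext_coercive:
  assumes "\<And>x a. (x, a) \<in> S \<Longrightarrow> k * (norm x)\<^sup>2 \<le> Re (cinner a x)"
  shows "k * (norm y)\<^sup>2 \<le> Re (cinner (bounded_ext y) y)"
proof -
  obtain s a where sa: "\<And>n. (s n, a n) \<in> S" and lim: "s \<longlonglongrightarrow> y"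
    using approximating_sequence[of y] by blast
  have "(\<lambda>n. k * (norm (s n))\<^sup>2) \<longlonglongrightarrow> k * (norm y)\<^sup>2"
    by (intro tendsto_intros lim)
  moreover have "(\<lambda>n. Re (cinner (a n) (s n))) \<longlonglongrightarrow> Re (cinner (bounded_ext y) y)"
    by (intro tendsto_Re tendsto_cinner tendsto_bounded_ext[OF sa lim] lim)
  ultimately show ?thesis
    using assms[OF sa] by (intro LIMSEQ_le) auto
qed

end

section \<open>Joint pairs of closed abstract Friedrichs operators\<close>

lemma coercive_norm_bounds:
  fixes mu X Y F :: real
  assumes "mu > 0" "X \<ge> 0" "Y \<ge> 0" "F \<ge> 0" and le: "mu * (X\<^sup>2 + Y\<^sup>2) \<le> F * X"
  shows "mu * X \<le> F" and "mu * Y \<le> F"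
proof -
  have "0 \<le> mu * X\<^sup>2" "0 \<le> mu * Y\<^sup>2"
    using \<open>mu > 0\<close> by simp_all
  then have X2: "mu * X\<^sup>2 \<le> F * X" and Y2: "mu * Y\<^sup>2 \<le> F * X"
    using le unfolding distrib_left by linarith+
  then have "mu * X * X \<le> F * X"
    by (simp add: power2_eq_square mult.assoc)
  then show X: "mu * X \<le> F"
    using \<open>X \<ge> 0\<close> \<open>F \<ge> 0\<close> by (cases "X = 0") (auto simp: mult_le_cancel_right)
  have "mu * (mu * Y\<^sup>2) \<le> mu * (F * X)"
    using Y2 \<open>mu > 0\<close> by simp
  also have "\<dots> \<le> F * F"
    using X \<open>F \<ge> 0\<close> by (simp add: mult.left_commute mult_left_mono)
  finally have "(mu * Y)\<^sup>2 \<le> F\<^sup>2"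
    by (simp add: power2_eq_square algebra_simps)
  then show "mu * Y \<le> F"
    using \<open>F \<ge> 0\<close> by (rule power2_le_imp_le)
qed

locale closed_friedrichs =
  fixes T0 Tt0 :: "('a::{complex_inner,complete_space} \<times> 'a) set" and c mu :: real
  assumes linop_T0: "is_linop T0" and linop_Tt0: "is_linop Tt0"
    and dense: "closure (Domain T0) = UNIV"
    and Domain_eq: "Domain Tt0 = Domain T0"
    and formally_adjoint: "(x, a) \<in> T0 \<Longrightarrow> (y, b) \<in> Tt0 \<Longrightarrow> cinner a y = cinner x b"
    and sum_bounded: "(x, a) \<in> T0 \<Longrightarrow> (x, b) \<in> Tt0 \<Longrightarrow> norm (a + b) \<le> c * norm x"
    and mu_pos: "mu > 0"
    and sum_coercive: "(x, a) \<in> T0 \<Longrightarrow> (x, b) \<in> Tt0 \<Longrightarrow> 2 * mu * (norm x)\<^sup>2 \<le> Re (cinner (a + b) x)"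
    and closed_T0: "closed T0" and closed_Tt0: "closed Tt0"

lemma closed_friedrichs_swap:
  assumes "closed_friedrichs T0 Tt0 c mu"
  shows "closed_friedrichs Tt0 T0 c mu"
proof -
  interpret closed_friedrichs T0 Tt0 c mu
    by (rule assms)
  show ?thesis
  proof
    show "closure (Domain Tt0) = UNIV"
      using dense Domain_eq by simp
    show "cinner a y = cinner x b" if "(x, a) \<in> Tt0" "(y, b) \<in> T0" for x y a b
      using formally_adjoint[OF that(2,1)] cinner_commute[of a y] cinner_commute[of x b] by simp
    show "norm (a + b) \<le> c * norm x" if "(x, a) \<in> Tt0" "(x, b) \<in> T0" for x a b
      using sum_bounded[OF that(2,1)] by (simp add: add.commute)
    show "2 * mu * (norm x)\<^sup>2 \<le> Re (cinner (a + b) x)" if "(x, a) \<in> Tt0" "(x, b) \<in> T0" for x a b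
      using sum_coercive[OF that(2,1)] by (simp add: add.commute)
  qed (use linop_T0 linop_Tt0 Domain_eq mu_pos closed_T0 closed_Tt0 in auto)
qed

lemma closed_friedrichs_pair_imp_closed_friedrichs:
  assumes "closed_friedrichs_pair T0 Tt0"
  shows "\<exists>c mu. closed_friedrichs T0 Tt0 c mu"
proof -
  have linop: "is_linop T0" "is_linop Tt0" and dom: "Domain Tt0 = Domain T0"
    using assms unfolding closed_friedrichs_pair_def friedrichs_pair_def op_dom_def by auto
  have apply_eq: "op_apply T0 x = a" "op_apply Tt0 x = b" if "(x, a) \<in> T0" "(x, b) \<in> Tt0" for x a b
    using that by (simp_all add: op_apply_eq linop)
  obtain c where c: "\<forall>\<phi> \<in> Domain T0. norm (op_apply T0 \<phi> + op_apply Tt0 \<phi>) \<le> c * norm \<phi>"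
    using assms unfolding closed_friedrichs_pair_def friedrichs_pair_def op_dom_def by blast
  obtain mu where "mu > 0" and mu: "\<forall>\<phi> \<in> Domain T0.
      complex_of_real (2 * mu * (norm \<phi>)\<^sup>2) \<le> cinner (op_apply T0 \<phi> + op_apply Tt0 \<phi>) \<phi>"
    using assms unfolding closed_friedrichs_pair_def friedrichs_pair_def op_dom_def by blast
  have "closed_friedrichs T0 Tt0 c mu"
  proof
    show "cinner a y = cinner x b" if "(x, a) \<in> T0" "(y, b) \<in> Tt0" for x y a b
      using assms that apply_eq[of x a "op_apply Tt0 x"] apply_eq[of y "op_apply T0 y" b] dom
      unfolding closed_friedrichs_pair_def friedrichs_pair_def op_dom_def
      by (metis Domain.DomainI op_apply_mem linop)
    show "norm (a + b) \<le> c * norm x" if "(x, a) \<in> T0" "(x, b) \<in> Tt0" for x a b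
      using c that apply_eq[OF that] by blast
    show "2 * mu * (norm x)\<^sup>2 \<le> Re (cinner (a + b) x)" if "(x, a) \<in> T0" "(x, b) \<in> Tt0" for x a b
      using mu that apply_eq[OF that] by (force simp: less_eq_complex_def)
  qed (use assms linop dom \<open>mu > 0\<close> in
      \<open>auto simp: closed_friedrichs_pair_def friedrichs_pair_def densely_defined_def op_dom_def
         closed_op_def\<close>)
  then show ?thesis
    by blast
qed

context closed_friedrichs
begin

definition T1 where "T1 = op_adjoint Tt0"
definition Tt1 where "Tt1 = op_adjoint T0"
definition T1_res where "T1_res = op_restrict T1 (set_plus_vec (op_dom T0) (op_ker Tt1))"
definition Tt1_res where "Tt1_res = op_restrict Tt1 (set_plus_vec (op_dom T0) (op_ker T1))"
definition Tsum where "Tsum = {(x, a + b) | x a b. (x, a) \<in> T0 \<and> (x, b) \<in> Tt0}"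

lemma mem_Tsum: "(x, s) \<in> Tsum \<longleftrightarrow> (\<exists>a b. (x, a) \<in> T0 \<and> (x, b) \<in> Tt0 \<and> s = a + b)"
  unfolding Tsum_def by blast

lemma is_linop_Tsum: "is_linop Tsum"
  unfolding is_linop_def
proof (intro conjI allI impI)
  have "(0, 0) \<in> T0" "(0, 0) \<in> Tt0"
    using is_linop_zero linop_T0 linop_Tt0 by blast+
  then show "(0, 0) \<in> Tsum"
    unfolding mem_Tsum by (intro exI[of _ 0]) simp
  fix x y u v
  assume "(x, y) \<in> Tsum" "(u, v) \<in> Tsum"
  then obtain a b a' b' where "(x, a) \<in> T0" "(x, b) \<in> Tt0" "y = a + b"
    "(u, a') \<in> T0" "(u, b') \<in> Tt0" "v = a' + b'"
    unfolding mem_Tsum by blast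
  then have "(x + u, a + a') \<in> T0" "(x + u, b + b') \<in> Tt0" "y + v = (a + a') + (b + b')"
    using is_linop_add linop_T0 linop_Tt0 by (blast, blast, simp add: algebra_simps)
  then show "(x + u, y + v) \<in> Tsum"
    unfolding mem_Tsum by blast
next
  fix r x y
  assume "(x, y) \<in> Tsum"
  then obtain a b where "(x, a) \<in> T0" "(x, b) \<in> Tt0" "y = a + b"
    unfolding mem_Tsum by blast
  then have "(scaleC r x, scaleC r a) \<in> T0" "(scaleC r x, scaleC r b) \<in> Tt0"
    "scaleC r y = scaleC r a + scaleC r b"
    using is_linop_scaleC linop_T0 linop_Tt0 by (blast, blast, simp add: scaleC_add_right)
  then show "(scaleC r x, scaleC r y) \<in> Tsum"
    unfolding mem_Tsum by blast
next
  fix x y z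
  assume "(x, y) \<in> Tsum" "(x, z) \<in> Tsum"
  then obtain a b a' b' where "(x, a) \<in> T0" "(x, b) \<in> Tt0" "y = a + b"
    "(x, a') \<in> T0" "(x, b') \<in> Tt0" "z = a' + b'"
    unfolding mem_Tsum by blast
  moreover have "a = a'" "b = b'"
    using calculation is_linop_single_valued linop_T0 linop_Tt0 by blast+
  ultimately show "y = z"
    by simp
qed

sublocale Tsum: bounded_symmetric Tsum c
proof
  show "is_linop Tsum"
    by (rule is_linop_Tsum)
  have "Domain Tsum = Domain T0"
  proof
    show "Domain Tsum \<subseteq> Domain T0"
      using mem_Tsum by blast
    show "Domain T0 \<subseteq> Domain Tsum"
    proof
      fix x
      assume "x \<in> Domain T0"
      then obtain a b where "(x, a) \<in> T0" "(x, b) \<in> Tt0"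
        using Domain_eq by blast
      then show "x \<in> Domain Tsum"
        using mem_Tsum by blast
    qed
  qed
  then show "closure (Domain Tsum) = UNIV"
    using dense by simp
  show "norm a \<le> c * norm x" if xa: "(x, a) \<in> Tsum" for x a
  proof -
    obtain a0 a1 where "a = a0 + a1" "(x, a0) \<in> T0" "(x, a1) \<in> Tt0"
      using xa unfolding mem_Tsum by blast
    then show ?thesis
      using sum_bounded by simp
  qed
  show "cinner a y = cinner x b" if xa: "(x, a) \<in> Tsum" and yb: "(y, b) \<in> Tsum" for x y a b
  proof -
    obtain a0 a1 b0 b1 where "a = a0 + a1" "(x, a0) \<in> T0" "(x, a1) \<in> Tt0"
      "b = b0 + b1" "(y, b0) \<in> T0" "(y, b1) \<in> Tt0"
      using xa yb unfolding mem_Tsum by blast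
    moreover have "cinner a0 y = cinner x b1"
      using formally_adjoint[OF \<open>(x, a0) \<in> T0\<close> \<open>(y, b1) \<in> Tt0\<close>] .
    moreover have "cinner a1 y = cinner x b0"
      using formally_adjoint[OF \<open>(y, b0) \<in> T0\<close> \<open>(x, a1) \<in> Tt0\<close>]
        cinner_commute[of a1 y] cinner_commute[of x b0] by simp
    ultimately show ?thesis
      by (simp add: cinner_add_left cinner_add_right)
  qed
qed

lemma closure_Domain_Tt0: "closure (Domain Tt0) = UNIV"
  using dense Domain_eq by simp

lemma is_linop_T1: "is_linop T1"
  unfolding T1_def by (rule is_linop_op_adjoint[OF closure_Domain_Tt0])

lemma is_linop_Tt1: "is_linop Tt1"
  unfolding Tt1_def by (rule is_linop_op_adjoint[OF dense])

lemma T0_subset_T1: "T0 \<subseteq> T1"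
proof (intro subrelI)
  fix x a
  assume "(x, a) \<in> T0"
  then show "(x, a) \<in> T1"
    unfolding T1_def mem_op_adjoint_iff
    using formally_adjoint cinner_commute by metis
qed

lemma ker_Tt1_subset_T1:
  assumes "(k, 0) \<in> Tt1"
  shows "(k, Tsum.bounded_ext k) \<in> T1"
  unfolding T1_def mem_op_adjoint_iff
proof (intro allI impI)
  fix x b
  assume "(x, b) \<in> Tt0"
  then obtain a where "(x, a) \<in> T0"
    using Domain_eq by blast
  then have "cinner a k = 0"
    using assms unfolding Tt1_def mem_op_adjoint_iff by fastforce
  moreover have "cinner (a + b) k = cinner x (Tsum.bounded_ext k)"
    using Tsum.bounded_ext_mem[of k] \<open>(x, a) \<in> T0\<close> \<open>(x, b) \<in> Tt0\<close>
    unfolding mem_op_adjoint_iff mem_Tsum by blast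
  ultimately show "cinner b k = cinner x (Tsum.bounded_ext k)"
    by (simp add: cinner_add_left)
qed

lemma T0_plus_ker_Tt1_subset_T1:
  assumes "(w, a) \<in> T0" "(k, 0) \<in> Tt1"
  shows "(w + k, a + Tsum.bounded_ext k) \<in> T1"
  using is_linop_add[OF is_linop_T1] T0_subset_T1 ker_Tt1_subset_T1 assms by blast

lemma T1_res_eq: "T1_res = {(w + k, a + Tsum.bounded_ext k) | w a k. (w, a) \<in> T0 \<and> (k, 0) \<in> Tt1}"
proof (intro equalityI subsetI)
  fix p
  assume "p \<in> T1_res"
  then obtain y w k where p: "p = (w + k, y)" "(w + k, y) \<in> T1" "w \<in> Domain T0" "(k, 0) \<in> Tt1"
    unfolding T1_res_def op_restrict_def set_plus_vec_def op_ker_def op_dom_def by blast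
  then obtain a where "(w, a) \<in> T0"
    by blast
  then have "y = a + Tsum.bounded_ext k"
    using is_linop_single_valued[OF is_linop_T1] T0_plus_ker_Tt1_subset_T1 p by blast
  then show "p \<in> {(w + k, a + Tsum.bounded_ext k) | w a k. (w, a) \<in> T0 \<and> (k, 0) \<in> Tt1}"
    using p \<open>(w, a) \<in> T0\<close> by blast
next
  fix p
  assume "p \<in> {(w + k, a + Tsum.bounded_ext k) | w a k. (w, a) \<in> T0 \<and> (k, 0) \<in> Tt1}"
  then obtain w a k where "p = (w + k, a + Tsum.bounded_ext k)" "(w, a) \<in> T0" "(k, 0) \<in> Tt1"
    by blast
  then show "p \<in> T1_res"
    using T0_plus_ker_Tt1_subset_T1
    unfolding T1_res_def op_restrict_def set_plus_vec_def op_ker_def op_dom_def by blast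
qed

lemma is_linop_T1_res: "is_linop T1_res"
  unfolding T1_res_def op_dom_def
  by (intro is_linop_op_restrict is_linop_T1 csubspace_set_plus_vec csubspace_op_ker is_linop_Tt1
      csubspace_Domain linop_T0)

lemma coercive_bounded_ext: "2 * mu * (norm x)\<^sup>2 \<le> Re (cinner (Tsum.bounded_ext x) x)"
  by (rule Tsum.bounded_ext_coercive) (auto simp: mem_Tsum sum_coercive)

lemma T1_res_coercive:
  assumes "(w, a) \<in> T0" "(k, 0) \<in> Tt1"
  shows "mu * ((norm (w + k))\<^sup>2 + (norm k)\<^sup>2) \<le> Re (cinner (a + Tsum.bounded_ext k) (w + k))"
proof -
  let ?C = Tsum.bounded_ext
  obtain b where "(w, b) \<in> Tt0"
    using assms(1) Domain_eq by blast
  then have Cw: "?C w = a + b"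
    using assms(1) by (intro Tsum.bounded_ext_extends) (auto simp: mem_Tsum)
  have ak: "cinner a k = 0"
    using assms unfolding Tt1_def mem_op_adjoint_iff by fastforce
  have bk: "cinner b k = cinner w (?C k)"
    using ker_Tt1_subset_T1[OF assms(2)] \<open>(w, b) \<in> Tt0\<close> unfolding T1_def mem_op_adjoint_iff by blast
  have bw: "Re (cinner b w) = Re (cinner a w)"
    using formally_adjoint[OF assms(1) \<open>(w, b) \<in> Tt0\<close>] Re_cinner_commute[of b w] by simp
  have "Re (cinner (?C (w + k)) (w + k)) + Re (cinner (?C k) k)
      = 2 * Re (cinner (a + ?C k) (w + k))"
    unfolding Tsum.bounded_ext.add Cw
    by (simp add: cinner_add_left cinner_add_right ak bk bw Re_cinner_commute[of w "?C k"])
  then show ?thesis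
    using coercive_bounded_ext[of "w + k"] coercive_bounded_ext[of k] by (simp add: algebra_simps)
qed

lemma T1_res_norm_bounds:
  assumes "(w, a) \<in> T0" "(k, 0) \<in> Tt1"
  shows "mu * norm (w + k) \<le> norm (a + Tsum.bounded_ext k)"
    and "mu * norm k \<le> norm (a + Tsum.bounded_ext k)"
proof -
  have "mu * ((norm (w + k))\<^sup>2 + (norm k)\<^sup>2) \<le> norm (a + Tsum.bounded_ext k) * norm (w + k)"
    using T1_res_coercive[OF assms] Re_cinner_le_norm order_trans by blast
  then show "mu * norm (w + k) \<le> norm (a + Tsum.bounded_ext k)"
    and "mu * norm k \<le> norm (a + Tsum.bounded_ext k)"
    using coercive_norm_bounds[OF mu_pos norm_ge_zero norm_ge_zero norm_ge_zero] by blast+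
qed

lemma T1_res_bounded_below: "(x, y) \<in> T1_res \<Longrightarrow> mu * norm x \<le> norm y"
  unfolding T1_res_eq using T1_res_norm_bounds(1) by blast

lemma Cauchy_ker_Tt1_part:
  assumes wa: "\<And>n. (w n, a n) \<in> T0" and k: "\<And>n. (k n, 0) \<in> Tt1"
    and "Cauchy (\<lambda>n. a n + Tsum.bounded_ext (k n))"
  shows "Cauchy k"
proof (rule Cauchy_if_dist_le[OF assms(3), where K = "1 / mu"])
  fix m n
  have "mu * norm (k m - k n) \<le> norm ((a m - a n) + Tsum.bounded_ext (k m - k n))"
    using is_linop_diff[OF linop_T0 wa wa] is_linop_diff[OF is_linop_Tt1 k k]
    by (intro T1_res_norm_bounds(2)) auto
  then show "dist (k m) (k n)
      \<le> 1 / mu * dist (a m + Tsum.bounded_ext (k m)) (a n + Tsum.bounded_ext (k n))"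
    using mu_pos by (simp add: dist_norm field_simps Tsum.bounded_ext.diff)
qed

lemma closed_T1_res: "closed T1_res"
  unfolding closed_sequential_limits
proof (intro allI impI, elim conjE)
  let ?C = Tsum.bounded_ext
  fix p l
  assume "\<forall>n. p n \<in> T1_res" and lim: "p \<longlonglongrightarrow> l"
  then have "\<forall>n. \<exists>w a k. (w, a) \<in> T0 \<and> (k, 0) \<in> Tt1 \<and> p n = (w + k, a + ?C k)"
    unfolding T1_res_eq by blast
  then obtain w a k where wa: "\<And>n. (w n, a n) \<in> T0" and k: "\<And>n. (k n, 0) \<in> Tt1"
    and p: "\<And>n. p n = (w n + k n, a n + ?C (k n))"
    by metis
  have "(\<lambda>n. a n + ?C (k n)) \<longlonglongrightarrow> snd l"
    using tendsto_snd[OF lim] by (simp add: p)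
  then have "Cauchy k"
    by (intro Cauchy_ker_Tt1_part[OF wa k] LIMSEQ_imp_Cauchy)
  then obtain K where K: "k \<longlonglongrightarrow> K"
    using Cauchy_convergent_iff convergent_def by blast
  have "(K, 0) \<in> Tt1"
    using closed_sequentially[OF closed_op_adjoint[of T0], of "\<lambda>n. (k n, 0)"] k
      tendsto_Pair[OF K tendsto_const]
    unfolding Tt1_def by blast
  moreover have "(fst l - K, snd l - ?C K) \<in> T0"
  proof (rule closed_sequentially[OF closed_T0, of "\<lambda>n. (w n, a n)"])
    show "(\<lambda>n. (w n, a n)) \<longlonglongrightarrow> (fst l - K, snd l - ?C K)"
    proof (intro tendsto_Pair)
      have "(\<lambda>n. fst (p n) - k n) \<longlonglongrightarrow> fst l - K"
        by (intro tendsto_diff tendsto_fst lim K)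
      then show "w \<longlonglongrightarrow> fst l - K"
        by (simp add: p)
      have "(\<lambda>n. snd (p n) - ?C (k n)) \<longlonglongrightarrow> snd l - ?C K"
        by (intro tendsto_diff tendsto_snd lim Tsum.bounded_ext.tendsto K)
      then show "a \<longlonglongrightarrow> snd l - ?C K"
        by (simp add: p)
    qed
  qed (use wa in simp)
  ultimately show "l \<in> T1_res"
    unfolding T1_res_eq
    by (intro CollectI exI[of _ "fst l - K"] exI[of _ "snd l - ?C K"] exI[of _ K]) auto
qed

lemma T1_res_range_orthogonal:
  assumes orth: "\<And>x y. (x, y) \<in> T1_res \<Longrightarrow> cinner y g = 0"
  shows "g = 0"
proof -
  have "(0, 0) \<in> Tt1" "(0, 0) \<in> T0"
    using is_linop_zero is_linop_Tt1 linop_T0 by blast+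
  have "(g, 0) \<in> Tt1"
    unfolding Tt1_def mem_op_adjoint_iff
  proof (intro allI impI)
    fix w a
    assume "(w, a) \<in> T0"
    then have "(w + 0, a + Tsum.bounded_ext 0) \<in> T1_res"
      using \<open>(0, 0) \<in> Tt1\<close> unfolding T1_res_eq by blast
    then show "cinner a g = cinner w 0"
      using orth by simp
  qed
  then have "(0 + g, 0 + Tsum.bounded_ext g) \<in> T1_res"
    using \<open>(0, 0) \<in> T0\<close> unfolding T1_res_eq by blast
  then have "2 * mu * (norm g)\<^sup>2 \<le> 0"
    using orth coercive_bounded_ext[of g] by simp
  then show "g = 0"
    using mu_pos by (simp add: mult_le_0_iff)
qed

lemma Range_T1_res: "Range T1_res = UNIV"
proof (rule closed_csubspace_eq_UNIV)
  show "closed (Range T1_res)"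
    using closed_Range_if_bounded_below[OF is_linop_T1_res closed_T1_res mu_pos]
      T1_res_bounded_below by blast
  show "csubspace (Range T1_res)"
    by (rule csubspace_Range[OF is_linop_T1_res])
  show "g = 0" if "\<And>v. v \<in> Range T1_res \<Longrightarrow> cinner v g = 0" for g
    using that by (intro T1_res_range_orthogonal) blast
qed

lemma bij_T1_res: "bij_betw (op_apply T1_res) (op_dom T1_res) UNIV"
  using bij_betw_op_apply_if_bounded_below[OF is_linop_T1_res mu_pos]
    T1_res_bounded_below Range_T1_res by blast

end

sublocale closed_friedrichs \<subseteq> swapped: closed_friedrichs Tt0 T0 c mu
  by (rule closed_friedrichs_swap) (rule closed_friedrichs_axioms)

context closed_friedrichs
begin

lemma swapped_T1_res: "swapped.T1_res = Tt1_res"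
  unfolding T1_res_def Tt1_res_def swapped.T1_res_def swapped.T1_def swapped.Tt1_def T1_def Tt1_def
    op_dom_def Domain_eq ..

lemma swapped_Tt1_res: "swapped.Tt1_res = T1_res"
  unfolding T1_res_def Tt1_res_def swapped.Tt1_res_def swapped.T1_def swapped.Tt1_def T1_def Tt1_def
    op_dom_def Domain_eq ..

lemma swapped_Tsum: "swapped.Tsum = Tsum"
  unfolding swapped.Tsum_def Tsum_def by (auto; metis add.commute)

lemma T1_res_subset_adjoint: "T1_res \<subseteq> op_adjoint Tt1_res"
proof (intro subrelI)
  let ?C = Tsum.bounded_ext
  fix u y
  assume "(u, y) \<in> T1_res"
  then obtain w a k where u: "u = w + k" "y = a + ?C k" and wa: "(w, a) \<in> T0" and k: "(k, 0) \<in> Tt1"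
    unfolding T1_res_eq by blast
  show "(u, y) \<in> op_adjoint Tt1_res"
    unfolding mem_op_adjoint_iff
  proof (intro allI impI)
    fix u' y'
    assume "(u', y') \<in> Tt1_res"
    then obtain w' b' k' where u': "u' = w' + k'" "y' = b' + ?C k'"
      and wb': "(w', b') \<in> Tt0" and k': "(k', 0) \<in> T1"
      unfolding swapped_T1_res[symmetric] swapped.T1_res_eq swapped_Tsum swapped.Tt1_def T1_def
      by blast
    have "cinner b' w = cinner w' a"
      using formally_adjoint[OF wa wb'] cinner_commute[of b' w] cinner_commute[of w' a] by simp
    moreover have "cinner b' k = cinner w' (?C k)"
      using ker_Tt1_subset_T1[OF k] wb' unfolding T1_def mem_op_adjoint_iff by blast
    moreover have "cinner (?C k') w = cinner k' a"
    proof -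
      have "(k', ?C k') \<in> Tt1"
        using swapped.ker_Tt1_subset_T1 k' unfolding swapped_Tsum swapped.Tt1_def swapped.T1_def
          T1_def Tt1_def by blast
      then have "cinner a k' = cinner w (?C k')"
        using wa unfolding Tt1_def mem_op_adjoint_iff by blast
      then show ?thesis
        using cinner_commute[of a k'] cinner_commute[of w "?C k'"] by simp
    qed
    moreover have "cinner (?C k') k = cinner k' (?C k)"
      by (rule Tsum.bounded_ext_symmetric)
    ultimately show "cinner y' u = cinner u' y"
      unfolding u u' by (simp add: cinner_add_left cinner_add_right)
  qed
qed

end

lemma (in closed_friedrichs) adjoint_T1_res: "op_adjoint T1_res = Tt1_res"
proof (rule op_adjoint_eqI)
  show "Tt1_res \<subseteq> op_adjoint T1_res"
    using swapped.T1_res_subset_adjoint unfolding swapped_T1_res swapped_Tt1_res .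
  show "Range Tt1_res = UNIV"
    using swapped.Range_T1_res unfolding swapped_T1_res .
  show "y = 0" if "(y, 0) \<in> op_adjoint T1_res" for y
    using that by (intro T1_res_range_orthogonal) (auto simp: mem_op_adjoint_iff)
qed

theorem corollary3p2:
  fixes T0 Tt0 :: "('a::{complex_inner, complete_space} \<times> 'a) set"
  assumes "closed_friedrichs_pair T0 Tt0"
  defines "T1 \<equiv> op_adjoint Tt0"
    and "Tt1 \<equiv> op_adjoint T0"
    and "W0 \<equiv> op_dom T0"
  shows "op_adjoint (op_restrict T1 (set_plus_vec W0 (op_ker Tt1))) = op_restrict Tt1 (set_plus_vec W0 (op_ker T1))
       \<and> op_adjoint (op_restrict Tt1 (set_plus_vec W0 (op_ker T1))) = op_restrict T1 (set_plus_vec W0 (op_ker Tt1))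
       \<and> bij_betw (op_apply (op_restrict T1 (set_plus_vec W0 (op_ker Tt1))))
           (op_dom (op_restrict T1 (set_plus_vec W0 (op_ker Tt1)))) UNIV
       \<and> bij_betw (op_apply (op_restrict Tt1 (set_plus_vec W0 (op_ker T1))))
           (op_dom (op_restrict Tt1 (set_plus_vec W0 (op_ker T1)))) UNIV"
proof -
  obtain c mu where "closed_friedrichs T0 Tt0 c mu"
    using closed_friedrichs_pair_imp_closed_friedrichs[OF assms(1)] by blast
  then interpret F: closed_friedrichs T0 Tt0 c mu .
  have A: "op_restrict T1 (set_plus_vec W0 (op_ker Tt1)) = F.T1_res"
    unfolding assms(2-4) F.T1_res_def F.T1_def F.Tt1_def ..
  have B: "op_restrict Tt1 (set_plus_vec W0 (op_ker T1)) = F.Tt1_res"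
    unfolding assms(2-4) F.Tt1_res_def F.T1_def F.Tt1_def ..
  show ?thesis
    unfolding A B
    using F.adjoint_T1_res F.swapped.adjoint_T1_res F.bij_T1_res F.swapped.bij_T1_res
    unfolding F.swapped_T1_res F.swapped_Tt1_res by blast
qed

end
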